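(* There exists a strongly oriented graph $D$ such that $\overrightarrow{hn}_{g}(D)=m(D)-n(D)$, where $n(D)$ and $m(D)$ denote the numbers of vertices and arcs of $D$.
   Context: An oriented graph is a digraph obtained from a finite simple graph by orienting each edge in exactly one direction. It is strongly oriented if for every ordered pair $u,v$ of distinct vertices there is a directed path from $u$ to $v$. The geodetic interval function $I_g$ assigns to $(u,v)$ the set of vertices on some shortest directed $(u,v)$-path or some shortest directed $(v,u)$-path. For $S\subseteq V(D)$, $I_g(S)=\bigcup_{u,v\in S}I_g(u,v)$; $C$ is convex if $I_g(C)=C$; the convex hull of $S$ is the smallest convex set containing $S$. A hull set is a set whose convex hull is $V(D)$, and $\overrightarrow{hn}_{g}(D)$ is the minimum size of a hull set. *)

theory Defs
  imports Main
begin

definition oriented_graph :: "'a set \<Rightarrow> ('a \<times> 'a) set \<Rightarrow> bool" where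
  "oriented_graph V A \<longleftrightarrow> finite V \<and> V \<noteq> {} \<and> A \<subseteq> V \<times> V
     \<and> (\<forall>v. (v, v) \<notin> A) \<and> (\<forall>u v. (u, v) \<in> A \<longrightarrow> (v, u) \<notin> A)"

definition strongly_oriented :: "'a set \<Rightarrow> ('a \<times> 'a) set \<Rightarrow> bool" where
  "strongly_oriented V A \<longleftrightarrow> oriented_graph V A
     \<and> (\<forall>u\<in>V. \<forall>v\<in>V. u \<noteq> v \<longrightarrow> (u, v) \<in> A\<^sup>+)"

definition dipath :: "('a \<times> 'a) set \<Rightarrow> 'a list \<Rightarrow> 'a \<Rightarrow> 'a \<Rightarrow> bool" where
  "dipath A p u v \<longleftrightarrow> p \<noteq> [] \<and> hd p = u \<and> last p = v \<and> distinct p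
     \<and> (\<forall>i. Suc i < length p \<longrightarrow> (p ! i, p ! Suc i) \<in> A)"

definition shortest_dipath :: "('a \<times> 'a) set \<Rightarrow> 'a list \<Rightarrow> 'a \<Rightarrow> 'a \<Rightarrow> bool" where
  "shortest_dipath A p u v \<longleftrightarrow> dipath A p u v
     \<and> (\<forall>q. dipath A q u v \<longrightarrow> length p \<le> length q)"

definition geo_interval :: "('a \<times> 'a) set \<Rightarrow> 'a \<Rightarrow> 'a \<Rightarrow> 'a set" where
  "geo_interval A u v = {w. \<exists>p. (shortest_dipath A p u v \<or> shortest_dipath A p v u) \<and> w \<in> set p}"

definition geo_interval_set :: "('a \<times> 'a) set \<Rightarrow> 'a set \<Rightarrow> 'a set" where
  "geo_interval_set A S = (\<Union>u\<in>S. \<Union>v\<in>S. geo_interval A u v)"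

definition geo_convex :: "('a \<times> 'a) set \<Rightarrow> 'a set \<Rightarrow> bool" where
  "geo_convex A C \<longleftrightarrow> geo_interval_set A C = C"

definition geo_convex_hull :: "'a set \<Rightarrow> ('a \<times> 'a) set \<Rightarrow> 'a set \<Rightarrow> 'a set" where
  "geo_convex_hull V A S = \<Inter> {C. C \<subseteq> V \<and> S \<subseteq> C \<and> geo_convex A C}"

definition hull_set :: "'a set \<Rightarrow> ('a \<times> 'a) set \<Rightarrow> 'a set \<Rightarrow> bool" where
  "hull_set V A S \<longleftrightarrow> S \<subseteq> V \<and> geo_convex_hull V A S = V"

definition hull_number :: "'a set \<Rightarrow> ('a \<times> 'a) set \<Rightarrow> nat" where
  "hull_number V A = Min {card S | S. hull_set V A S}"

end

theory Submission
  imports Defs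
begin

text \<open>Take the directed 4-cycle 0, 1, 2, 3 together with the chords 0 \<rightarrow> 2 and 1 \<rightarrow> 3: it is
  strongly oriented with n = 4 vertices and m = 6 arcs. There is no arc from 0 to 3, so
  0 1 3 and 0 2 3 are both shortest (0,3)-paths and the interval of 0 and 3 is the whole
  vertex set. Since singletons and the empty set are convex, no smaller set is a hull set,
  so the hull number is 2 = m - n.\<close>

lemma dipath_singleton: "dipath A [u] u u"
  by (simp add: dipath_def)

lemma dipath_nonempty: "dipath A p u v \<Longrightarrow> p \<noteq> []"
  by (simp add: dipath_def)

lemma shortest_dipath_self_iff: "shortest_dipath A p u u \<longleftrightarrow> p = [u]"
proof
  assume "shortest_dipath A p u u"
  then have "dipath A p u u" "length p \<le> length [u]"
    unfolding shortest_dipath_def using dipath_singleton[of A u] by blast+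
  then show "p = [u]" by (cases p) (auto simp: dipath_def)
next
  assume "p = [u]"
  moreover have "length [u] \<le> length q" if "dipath A q u u" for q
    using dipath_nonempty[OF that] by (cases q) auto
  ultimately show "shortest_dipath A p u u"
    by (simp add: shortest_dipath_def dipath_singleton)
qed

lemma geo_interval_self: "geo_interval A u u = {u}"
  by (auto simp: geo_interval_def shortest_dipath_self_iff)

lemma geo_convex_card_le_1:
  assumes "finite S" "card S \<le> 1"
  shows "geo_convex A S"
proof -
  have "u = v" if "u \<in> S" "v \<in> S" for u v
    using assms that by (auto simp: card_le_Suc0_iff_eq)
  then have "geo_interval_set A S = (\<Union>u\<in>S. geo_interval A u u)"
    unfolding geo_interval_set_def by blast
  then show ?thesis
    by (simp add: geo_convex_def geo_interval_self)
qed

lemma dipath_subset_Range: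
  assumes "dipath A p u v"
  shows "set p \<subseteq> insert u (Range A)"
proof
  fix w assume "w \<in> set p"
  then obtain i where i: "i < length p" "p ! i = w" by (auto simp: in_set_conv_nth)
  show "w \<in> insert u (Range A)"
  proof (cases i)
    case 0
    then show ?thesis using assms i by (cases p) (auto simp: dipath_def)
  next
    case (Suc j)
    then have "(p ! j, w) \<in> A" using assms i by (auto simp: dipath_def)
    then show ?thesis by blast
  qed
qed

lemma geo_interval_subset_Range: "geo_interval A u v \<subseteq> {u, v} \<union> Range A"
proof
  fix w assume "w \<in> geo_interval A u v"
  then obtain p where p: "shortest_dipath A p u v \<or> shortest_dipath A p v u" "w \<in> set p"
    unfolding geo_interval_def by blast
  then have "dipath A p u v \<or> dipath A p v u" by (auto simp: shortest_dipath_def)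
  then show "w \<in> {u, v} \<union> Range A"
  proof
    assume "dipath A p u v"
    from dipath_subset_Range[OF this] p(2) show ?thesis by blast
  next
    assume "dipath A p v u"
    from dipath_subset_Range[OF this] p(2) show ?thesis by blast
  qed
qed

lemma geo_convex_vertices:
  assumes "A \<subseteq> V \<times> V"
  shows "geo_convex A V"
proof -
  have "Range A \<subseteq> V" using assms by blast
  then have "geo_interval A u v \<subseteq> V" if "u \<in> V" "v \<in> V" for u v
    using geo_interval_subset_Range[of A u v] that by blast
  then have "geo_interval_set A V \<subseteq> V"
    by (simp add: geo_interval_set_def UN_subset_iff)
  moreover have "V \<subseteq> geo_interval_set A V"
  proof
    fix x assume "x \<in> V"
    then show "x \<in> geo_interval_set A V"
      unfolding geo_interval_set_def by (intro UN_I[of x]) (auto simp: geo_interval_self)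
  qed
  ultimately show ?thesis
    unfolding geo_convex_def by (rule equalityI)
qed

lemma geo_convex_hull_minimal:
  "C \<subseteq> V \<Longrightarrow> S \<subseteq> C \<Longrightarrow> geo_convex A C \<Longrightarrow> geo_convex_hull V A S \<subseteq> C"
  unfolding geo_convex_hull_def by blast

lemma hull_set_if_interval_covers:
  assumes "A \<subseteq> V \<times> V" "u \<in> V" "v \<in> V" "V \<subseteq> geo_interval A u v"
  shows "hull_set V A {u, v}"
proof -
  have covers: "C = V" if "C \<subseteq> V" "{u, v} \<subseteq> C" "geo_convex A C" for C
  proof -
    have "geo_interval A u v \<subseteq> geo_interval_set A C"
      using that(2) unfolding geo_interval_set_def by blast
    then show ?thesis using that(1,3) assms(4) unfolding geo_convex_def by blast
  qed
  have "geo_convex_hull V A {u, v} = V"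
    unfolding geo_convex_hull_def
  proof (rule antisym)
    show "\<Inter> {C. C \<subseteq> V \<and> {u, v} \<subseteq> C \<and> geo_convex A C} \<subseteq> V"
      using geo_convex_vertices[OF assms(1)] assms(2,3) by (intro Inter_lower) simp
    show "V \<subseteq> \<Inter> {C. C \<subseteq> V \<and> {u, v} \<subseteq> C \<and> geo_convex A C}"
      using covers by (intro Inter_greatest) auto
  qed
  then show ?thesis
    using assms(2,3) by (simp add: hull_set_def)
qed

lemma hull_set_card_ge_2:
  assumes "finite V" "card V \<ge> 2" "hull_set V A S"
  shows "card S \<ge> 2"
proof (rule ccontr)
  assume small: "\<not> card S \<ge> 2"
  have S: "S \<subseteq> V" "geo_convex_hull V A S = V" using assms(3) by (auto simp: hull_set_def)
  then have "finite S" using assms(1) finite_subset by blast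
  with small have "geo_convex A S" by (intro geo_convex_card_le_1) auto
  then have "geo_convex_hull V A S \<subseteq> S" by (rule geo_convex_hull_minimal[OF S(1) order_refl])
  then have "V \<subseteq> S" using S(2) by simp
  then have "card V \<le> card S" by (rule card_mono[OF \<open>finite S\<close>])
  with small assms(2) show False by linarith
qed

lemma hull_number_eq_2:
  assumes "finite V" "card V \<ge> 2" "hull_set V A {u, v}" "u \<noteq> v"
  shows "hull_number V A = 2"
proof -
  let ?N = "{card S | S. hull_set V A S}"
  have "?N \<subseteq> {..card V}"
    using card_mono[OF assms(1)] by (auto simp: hull_set_def)
  then have "finite ?N" by (rule finite_subset) simp
  moreover have "2 \<in> ?N"
    using assms(3,4) by (auto intro!: exI[of _ "{u, v}"])
  moreover have "\<forall>n\<in>?N. 2 \<le> n" using hull_set_card_ge_2[OF assms(1,2)] by blast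
  ultimately show ?thesis
    unfolding hull_number_def by (intro antisym Min_le Min.boundedI) auto
qed

lemma dipath_length_ge_3:
  assumes "dipath A p u v" "u \<noteq> v" "(u, v) \<notin> A"
  shows "length p \<ge> 3"
proof (rule ccontr)
  assume "\<not> length p \<ge> 3"
  moreover have "p \<noteq> []" using dipath_nonempty[OF assms(1)] .
  ultimately consider a where "p = [a]" | a b where "p = [a, b]"
    by (cases p; cases "tl p") (auto simp: Suc_le_eq numeral_eq_Suc)
  then show False using assms by cases (auto simp: dipath_def)
qed

lemma shortest_dipath_two_arcs:
  assumes "(u, w) \<in> A" "(w, v) \<in> A" "(u, v) \<notin> A" "distinct [u, w, v]"
  shows "shortest_dipath A [u, w, v] u v"
proof -
  have "dipath A [u, w, v] u v"
    using assms by (auto simp: dipath_def less_Suc_eq)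
  moreover have "length [u, w, v] \<le> length q" if "dipath A q u v" for q
    using dipath_length_ge_3[OF that] assms by simp
  ultimately show ?thesis by (simp add: shortest_dipath_def)
qed

definition chorded_square_vertices :: "nat set" where
  "chorded_square_vertices = {0, 1, 2, 3}"

definition chorded_square_arcs :: "(nat \<times> nat) set" where
  "chorded_square_arcs = {(0, 1), (1, 2), (2, 3), (3, 0), (0, 2), (1, 3)}"

lemma chorded_square_arcs_subset:
  "chorded_square_arcs \<subseteq> chorded_square_vertices \<times> chorded_square_vertices"
  by (auto simp: chorded_square_vertices_def chorded_square_arcs_def)

lemma strongly_oriented_chorded_square:
  "strongly_oriented chorded_square_vertices chorded_square_arcs"
proof -
  let ?A = chorded_square_arcs
  have arcs: "(0, 1) \<in> ?A" "(0, 2) \<in> ?A" "(1, 3) \<in> ?A" "(2, 3) \<in> ?A" "(3, 0) \<in> ?A"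
    by (auto simp: chorded_square_arcs_def)
  have "(0, 3) \<in> ?A\<^sup>+" "(1, 0) \<in> ?A\<^sup>+" "(2, 0) \<in> ?A\<^sup>+" "(0, 0) \<in> ?A\<^sup>+"
    using arcs by (meson trancl.intros trancl_into_trancl)+
  then have "(0, u) \<in> ?A\<^sup>+ \<and> (u, 0) \<in> ?A\<^sup>+" if "u \<in> chorded_square_vertices" for u
    using that arcs by (auto simp: chorded_square_vertices_def)
  then have "(u, v) \<in> ?A\<^sup>+" if "u \<in> chorded_square_vertices" "v \<in> chorded_square_vertices" for u v
    using that trancl_trans by meson
  moreover have "oriented_graph chorded_square_vertices ?A"
    by (auto simp: oriented_graph_def chorded_square_vertices_def chorded_square_arcs_def)
  ultimately show ?thesis
    by (simp add: strongly_oriented_def)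
qed

lemma chorded_square_interval_0_3:
  "chorded_square_vertices \<subseteq> geo_interval chorded_square_arcs 0 3"
proof -
  have "shortest_dipath chorded_square_arcs [0, 1, 3] 0 3"
       "shortest_dipath chorded_square_arcs [0, 2, 3] 0 3"
    by (auto intro!: shortest_dipath_two_arcs simp: chorded_square_arcs_def)
  then show ?thesis
    unfolding geo_interval_def chorded_square_vertices_def by fastforce
qed

lemma hull_number_chorded_square:
  "hull_number chorded_square_vertices chorded_square_arcs = 2"
  using hull_set_if_interval_covers[OF chorded_square_arcs_subset _ _ chorded_square_interval_0_3]
  by (intro hull_number_eq_2[where u = 0 and v = 3]) (auto simp: chorded_square_vertices_def)

theorem corollary2:
  shows "\<exists>(V :: nat set) (A :: (nat \<times> nat) set). strongly_oriented V A
           \<and> int (hull_number V A) = int (card A) - int (card V)"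
proof -
  have "card chorded_square_arcs = 6" by (simp add: chorded_square_arcs_def)
  moreover have "card chorded_square_vertices = 4" by (simp add: chorded_square_vertices_def)
  ultimately show ?thesis
    using strongly_oriented_chorded_square hull_number_chorded_square
    by (intro exI[of _ chorded_square_vertices] exI[of _ chorded_square_arcs]) simp
qed

end
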